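(* Let $X$ be a supertropical semiring. Let $n,j,i_1,\dots,i_j,d_1,\dots,d_j\in\mathbb{N}_{\ge1}$ with $i_1<i_2<\dots<i_j\le n$ and $d_1>d_2>\dots>d_j$, and set $i_0=0$. Then for all $x_1,\dots,x_n\in X$, $$\mathrm{Minsym}_n\Big(\prod_{t=1}^{j}(x_{i_{t-1}+1}\cdots x_{i_t})^{d_t}\Big)=e_{i_j}(x_1,\dots,x_n)^{d_j}\cdot\mathrm{Minsym}_n\Big(\prod_{t=1}^{j-1}(x_{i_{t-1}+1}\cdots x_{i_t})^{d_t-d_j}\Big).$$
   Context: A semiring $(X,+,0,\cdot)$: $(X,+,0)$ commutative monoid, $(X,\cdot)$ semigroup, distributivity, $0$ absorbing. $\nu(x)=x+x$. A supertropical semiring is a unital commutative semiring with $2=4$ (where $n=1+\dots+1$), such that $a+b\in\{a,b\}$ whenever $\nu(a)\ne\nu(b)$, and $a+b=\nu(a)$ whenever $\nu(a)=\nu(b)$. For a pure monomial $m=x_1^{c_1}\cdots x_n^{c_n}$ (coefficient $1$), its minimal symmetrization $\mathrm{Minsym}_n(m)$ is the sum, with each term taken exactly once, of the distinct monomials in $\{x_{\sigma(1)}^{c_1}\cdots x_{\sigma(n)}^{c_n}:\sigma\in S_n\}$ (monomials equal up to reordering of factors are identified); the minimal symmetrization of the empty monomial is $1$. $e_k(x_1,\dots,x_n)$ is the sum of all products of $k$ distinct variables. *)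

theory Defs
  imports "HOL-Combinatorics.Permutations"
begin

text \<open>Supertropical semiring: unital commutative semiring (no 0 \<noteq> 1 required)
  with 2 = 4 and the supertropical addition rules, where nu a = a + a.\<close>

class supertropical = comm_semiring_0 + comm_monoid_mult +
  assumes two_eq_four: "(1::'a) + 1 = 1 + 1 + 1 + 1"
    and add_distinct_nu: "a + a \<noteq> b + b \<Longrightarrow> a + b \<in> {a, b}"
    and add_equal_nu: "a + a = b + b \<Longrightarrow> a + b = a + a"

text \<open>A pure monomial in x_1..x_n is given by its exponent vector c (indices 1..n).
  Its minimal symmetrization: the sum, each taken once, of the distinct monomials
  obtained by permuting the variables, i.e. the distinct exponent vectors c o sigma.\<close>

definition minsym :: "nat \<Rightarrow> (nat \<Rightarrow> nat) \<Rightarrow> (nat \<Rightarrow> 'a) \<Rightarrow> 'a::{comm_semiring_0,comm_monoid_mult}" where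
  "minsym n c x = (\<Sum>a \<in> {c \<circ> \<sigma> | \<sigma>. \<sigma> permutes {1..n}}. \<Prod>k\<in>{1..n}. x k ^ a k)"

definition esym :: "nat \<Rightarrow> nat \<Rightarrow> (nat \<Rightarrow> 'a) \<Rightarrow> 'a::{comm_semiring_0,comm_monoid_mult}" where
  "esym n k x = (\<Sum>S \<in> {S. S \<subseteq> {1..n} \<and> card S = k}. \<Prod>m\<in>S. x m)"

text \<open>Exponent vector of the block x_{i(t-1)+1} ... x_{i t} (indicator of the block).\<close>

definition blk :: "(nat \<Rightarrow> nat) \<Rightarrow> nat \<Rightarrow> nat \<Rightarrow> nat" where
  "blk i t k = (if i (t - 1) < k \<and> k \<le> i t then 1 else 0)"

end

theory Submission
  imports Defs
begin

text \<open>Write the exponent vector as c + D 1_M with M = {1..i_j}, D = d_j and c supported on M.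
  Since (a + b)^D = a^D + b^D in a supertropical semiring, e_{i_j}^D Minsym(c) is the sum of
  the monomials x^(b + D 1_S) over all subsets S of size i_j and all rearrangements b of c. The
  terms with supp b contained in S are exactly the rearrangements of c + D 1_M, each occurring
  once. Every other term is absorbed by two terms that are closer to being covered: pick
  p in supp b - S and q in S - supp b, and either exchange q for p in S or transpose p and q in b.
  The absorption is the supertropical identity a^(k+l) + b^(k+l) + a^k b^l = a^(k+l) + b^(k+l).\<close>

lemma double_double: "((z::'a::supertropical) + z) + (z + z) = z + z"
proof -
  have "(z + z) + (z + z) = (1 + 1 + 1 + 1) * z"
    by (simp only: distrib_right mult_1_left add.assoc)
  also have "\<dots> = (1 + 1) * z" by (simp only: two_eq_four[symmetric])
  also have "\<dots> = z + z" by (simp only: distrib_right mult_1_left)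
  finally show ?thesis .
qed

lemma double_power:
  assumes "0 < n"
  shows "((z::'a::supertropical) + z) ^ n = z ^ n + z ^ n"
  using assms
proof (induction n rule: nat_induct_non_zero)
  case (Suc n)
  have "(z + z) ^ Suc n = (z ^ n + z ^ n) * (z + z)" by (simp add: Suc.IH mult.commute)
  also have "\<dots> = (z ^ Suc n + z ^ Suc n) + (z ^ Suc n + z ^ Suc n)"
    by (simp add: distrib_left distrib_right mult.commute add.assoc)
  finally show ?case by (simp only: double_double)
qed simp

lemma double_power_eq:
  assumes "(a::'a::supertropical) + a = b + b"
  shows "a ^ l + a ^ l = b ^ l + b ^ l"
proof (cases "l = 0")
  case False
  then show ?thesis using assms by (metis double_power gr0I)
qed simp

lemma supertropical_add_cases: "(a::'a::supertropical) + a = b + b \<or> a + b = a \<or> a + b = b"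
  using add_distinct_nu[of a b] by auto

lemma power_add_absorb:
  fixes a b :: "'a::supertropical"
  assumes ab: "a + b = a" and "0 < l"
  shows "a ^ (k + l) + a ^ k * b ^ l = a ^ (k + l)"
  using assms(2)
proof (induction l arbitrary: k rule: nat_induct_non_zero)
  case 1
  show ?case using ab by (metis distrib_left power_add power_one_right)
next
  case (Suc l)
  have shift: "a ^ (k + 1) * b ^ l + a ^ k * b ^ Suc l = a ^ (k + 1) * b ^ l"
  proof -
    have "a ^ k * b ^ l * (a + b) = a ^ k * b ^ l * a" using ab by simp
    then show ?thesis by (simp add: distrib_left distrib_right ac_simps)
  qed
  have e: "k + Suc l = k + 1 + l" by simp
  have "a ^ (k + Suc l) + a ^ k * b ^ Suc l = (a ^ (k + 1 + l) + a ^ (k + 1) * b ^ l) + a ^ k * b ^ Suc l"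
    by (simp only: e Suc.IH)
  also have "\<dots> = a ^ (k + 1 + l) + a ^ (k + 1) * b ^ l" by (simp only: add.assoc shift)
  also have "\<dots> = a ^ (k + Suc l)" by (simp only: e Suc.IH)
  finally show ?case .
qed

lemma power_add_distrib:
  fixes a b :: "'a::supertropical"
  assumes "0 < n"
  shows "(a + b) ^ n = a ^ n + b ^ n"
proof -
  consider "a + a = b + b" | "a + b = a" | "a + b = b" using supertropical_add_cases by blast
  then show ?thesis
  proof cases
    case 1
    have "(a + b) ^ n = a ^ n + a ^ n" using add_equal_nu[OF 1] double_power[OF assms] by simp
    also have "\<dots> = a ^ n + b ^ n" using add_equal_nu[OF double_power_eq[OF 1]] by simp
    finally show ?thesis .
  next
    case 2
    then show ?thesis using power_add_absorb[OF 2 assms, of 0] by simp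
  next
    case 3
    then have "b + a = b" by (simp add: add.commute)
    then show ?thesis using power_add_absorb[of b a n 0] 3 assms by (simp add: add.commute)
  qed
qed

lemma power_sum_distrib:
  fixes f :: "'b \<Rightarrow> 'a::supertropical"
  assumes "0 < n"
  shows "sum f A ^ n = (\<Sum>s\<in>A. f s ^ n)"
proof (induction A rule: infinite_finite_induct)
  case (insert a A)
  then show ?case using power_add_distrib[OF assms, of "f a" "sum f A"] by simp
qed (use assms in \<open>cases n; simp\<close>)+

lemma power_mixed_absorb:
  fixes a b :: "'a::supertropical"
  assumes "0 < k" "0 < l"
  shows "a ^ (k + l) + b ^ (k + l) + a ^ k * b ^ l = a ^ (k + l) + b ^ (k + l)"
proof -
  consider "a + a = b + b" | "a + b = a" | "b + a = b"
    using supertropical_add_cases[of a b] by (auto simp: add.commute)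
  then show ?thesis
  proof cases
    case 1
    define w where "w = a ^ (k + l) + a ^ (k + l)"
    have ab: "a ^ (k + l) + b ^ (k + l) = w"
      unfolding w_def using add_equal_nu[OF double_power_eq[OF 1]] .
    have "a ^ k * b ^ l + a ^ k * b ^ l = a ^ k * (a ^ l + a ^ l)"
      by (simp add: double_power_eq[OF 1, of l] distrib_left[symmetric])
    then have "w + w = a ^ k * b ^ l + a ^ k * b ^ l"
      unfolding w_def by (simp add: double_double distrib_left power_add)
    then have "w + a ^ k * b ^ l = w"
      using add_equal_nu by (metis w_def double_double)
    then show ?thesis using ab by simp
  next
    case 2
    have "a ^ (k + l) + b ^ (k + l) + a ^ k * b ^ l = (a ^ (k + l) + a ^ k * b ^ l) + b ^ (k + l)"
      by (simp only: add_ac)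
    then show ?thesis using power_add_absorb[OF 2 assms(2), of k] by simp
  next
    case 3
    then have "b ^ (l + k) + b ^ l * a ^ k = b ^ (l + k)" by (rule power_add_absorb[OF _ assms(1)])
    then show ?thesis by (simp add: ac_simps)
  qed
qed

lemma sum_absorb:
  fixes f :: "'b \<Rightarrow> 'a::comm_monoid_add"
  assumes "finite P" "finite Q"
    and absorbed: "\<And>q. q \<in> Q \<Longrightarrow> \<exists>p1\<in>P. \<exists>p2\<in>P. p1 \<noteq> p2 \<and> f p1 + f p2 + f q = f p1 + f p2"
  shows "sum f P + sum f Q = sum f P"
  using assms(2) absorbed
proof (induction Q rule: finite_induct)
  case (insert q Q)
  obtain p1 p2 where p: "p1 \<in> P" "p2 \<in> P" "p1 \<noteq> p2" "f p1 + f p2 + f q = f p1 + f p2"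
    using insert.prems by blast
  have r1: "sum f P = f p1 + sum f (P - {p1})" using p assms(1) by (intro sum.remove)
  have r2: "sum f (P - {p1}) = f p2 + sum f (P - {p1} - {p2})"
    using p assms(1) by (intro sum.remove) auto
  have P_split: "sum f P = f p1 + f p2 + sum f (P - {p1} - {p2})"
    unfolding r1 r2 by (simp only: add.assoc)
  have "sum f P + f q = (f p1 + f p2 + f q) + sum f (P - {p1} - {p2})"
    unfolding P_split by (simp only: add_ac)
  also have "\<dots> = sum f P" using p(4) P_split by simp
  finally have "sum f P + f q = sum f P" .
  then show ?case using insert by (simp add: add.assoc[symmetric])
qed simp

lemma sum_absorb_by_measure:
  fixes f :: "'b \<Rightarrow> 'a::comm_monoid_add" and \<beta> :: "'b \<Rightarrow> nat"
  assumes A: "finite A"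
    and absorbed: "\<And>a. a \<in> A \<Longrightarrow> 0 < \<beta> a \<Longrightarrow> \<exists>a1\<in>A. \<exists>a2\<in>A.
          a1 \<noteq> a2 \<and> \<beta> a1 < \<beta> a \<and> \<beta> a2 < \<beta> a \<and> f a1 + f a2 + f a = f a1 + f a2"
  shows "sum f A = sum f {a\<in>A. \<beta> a = 0}"
proof -
  have "sum f {a\<in>A. \<beta> a \<le> k} = sum f {a\<in>A. \<beta> a = 0}" for k
  proof (induction k)
    case (Suc k)
    have "{a\<in>A. \<beta> a \<le> Suc k} = {a\<in>A. \<beta> a \<le> k} \<union> {a\<in>A. \<beta> a = Suc k}" by auto
    then have "sum f {a\<in>A. \<beta> a \<le> Suc k} = sum f {a\<in>A. \<beta> a \<le> k} + sum f {a\<in>A. \<beta> a = Suc k}"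
      using A by (simp only:) (intro sum.union_disjoint; auto)
    also have "\<dots> = sum f {a\<in>A. \<beta> a \<le> k}"
    proof (rule sum_absorb)
      fix a assume "a \<in> {a\<in>A. \<beta> a = Suc k}"
      then show "\<exists>a1\<in>{a\<in>A. \<beta> a \<le> k}. \<exists>a2\<in>{a\<in>A. \<beta> a \<le> k}. a1 \<noteq> a2 \<and> f a1 + f a2 + f a = f a1 + f a2"
        using absorbed[of a] by fastforce
    qed (use A in auto)
    finally show ?case using Suc.IH by simp
  qed simp
  moreover have "{a\<in>A. \<beta> a \<le> sum \<beta> A} = A" using A member_le_sum[of _ A \<beta>] by auto
  ultimately show ?thesis by metis
qed

lemma exists_permutes_image_eq:
  assumes "finite W" "P \<subseteq> W" "Q \<subseteq> W" "card P = card Q"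
  shows "\<exists>\<rho>. \<rho> permutes W \<and> \<rho> ` P = Q"
proof -
  have fin: "finite P" "finite Q" using assms finite_subset by blast+
  obtain h1 where h1: "bij_betw h1 P Q" using finite_same_card_bij[OF fin assms(4)] by blast
  have "card (W - P) = card (W - Q)" using assms fin by (simp add: card_Diff_subset)
  then obtain h2 where h2: "bij_betw h2 (W - P) (W - Q)"
    using finite_same_card_bij assms(1) by blast
  define \<rho> where "\<rho> = (\<lambda>y. if y \<in> P then h1 y else if y \<in> W then h2 y else y)"
  have b1: "bij_betw \<rho> P Q"
    using h1 unfolding \<rho>_def by (rule bij_betw_cong[THEN iffD1, rotated]) auto
  have b2: "bij_betw \<rho> (W - P) (W - Q)"
    using h2 unfolding \<rho>_def by (rule bij_betw_cong[THEN iffD1, rotated]) auto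
  have "bij_betw \<rho> (P \<union> (W - P)) (Q \<union> (W - Q))" by (rule bij_betw_combine[OF b1 b2]) auto
  moreover have "P \<union> (W - P) = W" "Q \<union> (W - Q) = W" using assms by auto
  ultimately have "bij_betw \<rho> W W" by simp
  then have "\<rho> permutes W" by (rule bij_imp_permutes) (auto simp: \<rho>_def assms(2)[THEN subsetD])
  then show ?thesis using b1 by (auto simp: bij_betw_def)
qed

lemma prod_power_distrib': "prod f A ^ n = (\<Prod>a\<in>A. f a ^ n)"
  for f :: "'b \<Rightarrow> 'a::comm_monoid_mult"
  by (induction A rule: infinite_finite_induct) (auto simp: power_mult_distrib)

definition monomial :: "nat \<Rightarrow> (nat \<Rightarrow> nat) \<Rightarrow> (nat \<Rightarrow> 'a) \<Rightarrow> 'a::comm_monoid_mult" where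
  "monomial n a x = (\<Prod>k\<in>{1..n}. x k ^ a k)"

definition exponent_orbit :: "nat \<Rightarrow> (nat \<Rightarrow> nat) \<Rightarrow> (nat \<Rightarrow> nat) set" where
  "exponent_orbit n c = {c \<circ> \<sigma> | \<sigma>. \<sigma> permutes {1..n}}"

definition raise_on :: "nat set \<Rightarrow> nat \<Rightarrow> (nat \<Rightarrow> nat) \<Rightarrow> nat \<Rightarrow> nat" where
  "raise_on S D b = (\<lambda>k. b k + (if k \<in> S then D else 0))"

definition raised_monomial :: "nat \<Rightarrow> nat \<Rightarrow> (nat \<Rightarrow> 'a) \<Rightarrow> nat set \<times> (nat \<Rightarrow> nat) \<Rightarrow> 'a::comm_monoid_mult"
  where "raised_monomial n D x = (\<lambda>(S, b). monomial n (raise_on S D b) x)"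

lemma minsym_eq_sum_orbit: "minsym n c x = (\<Sum>a\<in>exponent_orbit n c. monomial n a x)"
  unfolding minsym_def monomial_def exponent_orbit_def ..

lemma finite_exponent_orbit: "finite (exponent_orbit n c)"
  unfolding exponent_orbit_def using finite_permutations[of "{1..n}"]
  by (simp add: setcompr_eq_image)

lemma exponent_orbit_comp_transpose:
  assumes "b \<in> exponent_orbit n c" "p \<in> {1..n}" "q \<in> {1..n}"
  shows "b \<circ> transpose p q \<in> exponent_orbit n c"
proof -
  obtain \<tau> where \<tau>: "\<tau> permutes {1..n}" "b = c \<circ> \<tau>"
    using assms(1) unfolding exponent_orbit_def by blast
  have "\<tau> \<circ> transpose p q permutes {1..n}"
    by (rule permutes_compose[OF permutes_swap_id[OF assms(2,3)] \<tau>(1)])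
  moreover have "b \<circ> transpose p q = c \<circ> (\<tau> \<circ> transpose p q)" using \<tau>(2) by (simp add: comp_assoc)
  ultimately show ?thesis unfolding exponent_orbit_def by blast
qed

lemma support_exponent_orbit:
  assumes "b \<in> exponent_orbit n c" "{k. c k \<noteq> 0} \<subseteq> {1..n}"
  shows "{k. b k \<noteq> 0} \<subseteq> {1..n}" "card {k. b k \<noteq> 0} = card {k. c k \<noteq> 0}"
proof -
  obtain \<sigma> where \<sigma>: "\<sigma> permutes {1..n}" "b = c \<circ> \<sigma>"
    using assms(1) unfolding exponent_orbit_def by blast
  show "{k. b k \<noteq> 0} \<subseteq> {1..n}" using assms(2) permutes_in_image[OF \<sigma>(1)] \<sigma>(2) by auto
  have "\<sigma> ` {k. b k \<noteq> 0} = {k. c k \<noteq> 0}"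
    using permutes_surj[OF \<sigma>(1)] \<sigma>(2) by (auto simp: surj_def)
  then show "card {k. b k \<noteq> 0} = card {k. c k \<noteq> 0}"
    using permutes_inj[OF \<sigma>(1)] by (metis card_image inj_on_subset subset_UNIV)
qed

lemma monomial_raise_on:
  assumes "S \<subseteq> {1..n}"
  shows "monomial n (raise_on S D b) x = (\<Prod>k\<in>S. x k ^ D) * monomial n b x"
proof -
  have "monomial n (raise_on S D b) x = (\<Prod>k\<in>{1..n}. (if k \<in> S then x k ^ D else 1) * x k ^ b k)"
    unfolding monomial_def raise_on_def by (intro prod.cong) (auto simp: power_add mult.commute)
  also have "\<dots> = (\<Prod>k\<in>{1..n} \<inter> S. x k ^ D) * monomial n b x"
    by (simp add: prod.distrib prod.inter_restrict monomial_def)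
  finally show ?thesis using assms by (simp add: Int_absorb1)
qed

lemma monomial_split_pair:
  assumes "p \<in> {1..n}" "q \<in> {1..n}" "p \<noteq> q"
  shows "monomial n a x = x p ^ a p * x q ^ a q * (\<Prod>k\<in>{1..n} - {p, q}. x k ^ a k)"
proof -
  have "monomial n a x = x p ^ a p * (\<Prod>k\<in>{1..n} - {p}. x k ^ a k)"
    unfolding monomial_def using assms(1) by (intro prod.remove) simp
  also have "(\<Prod>k\<in>{1..n} - {p}. x k ^ a k) = x q ^ a q * (\<Prod>k\<in>{1..n} - {p} - {q}. x k ^ a k)"
    using assms by (intro prod.remove) auto
  moreover have "{1..n} - {p} - {q} = {1..n} - {p, q}" by auto
  ultimately show ?thesis by (simp only: mult.assoc)
qed

lemma esym_power_mult_minsym: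
  fixes x :: "nat \<Rightarrow> 'a::supertropical"
  assumes "0 < D"
  shows "esym n m x ^ D * minsym n c x
       = sum (raised_monomial n D x) ({S. S \<subseteq> {1..n} \<and> card S = m} \<times> exponent_orbit n c)"
proof -
  have "esym n m x ^ D = (\<Sum>S\<in>{S. S \<subseteq> {1..n} \<and> card S = m}. \<Prod>k\<in>S. x k ^ D)"
    unfolding esym_def power_sum_distrib[OF assms] prod_power_distrib' ..
  then have "esym n m x ^ D * minsym n c x
      = (\<Sum>(S, b)\<in>{S. S \<subseteq> {1..n} \<and> card S = m} \<times> exponent_orbit n c. (\<Prod>k\<in>S. x k ^ D) * monomial n b x)"
    unfolding minsym_eq_sum_orbit by (simp add: sum_product sum.cartesian_product)
  also have "\<dots> = sum (raised_monomial n D x) ({S. S \<subseteq> {1..n} \<and> card S = m} \<times> exponent_orbit n c)"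
    by (intro sum.cong) (auto simp: monomial_raise_on raised_monomial_def)
  finally show ?thesis .
qed

lemma monomial_raise_on_transpose_absorb:
  fixes x :: "nat \<Rightarrow> 'a::supertropical"
  assumes S: "S \<subseteq> {1..n}" and p: "p \<in> {1..n}" "p \<notin> S" and q: "q \<in> S"
    and b: "b p \<noteq> 0" "b q = 0" and D: "0 < D"
  defines "a1 \<equiv> raise_on (insert p (S - {q})) D b" and "a2 \<equiv> raise_on S D (b \<circ> transpose p q)"
  shows "monomial n a1 x + monomial n a2 x + monomial n (raise_on S D b) x
       = monomial n a1 x + monomial n a2 x"
proof -
  have qn: "q \<in> {1..n}" and pq: "p \<noteq> q" using S p q by auto
  define W where "W = (\<Prod>k\<in>{1..n} - {p, q}. x k ^ raise_on S D b k)"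
  have monomial_eq: "monomial n a x = x p ^ a p * x q ^ a q * W"
    if "\<forall>k\<in>{1..n} - {p, q}. a k = raise_on S D b k" for a
  proof -
    have "(\<Prod>k\<in>{1..n} - {p, q}. x k ^ a k) = W" unfolding W_def using that by (intro prod.cong) auto
    then show ?thesis by (simp only: monomial_split_pair[OF p(1) qn pq])
  qed
  \<comment> \<open>At \<open>(p, q)\<close> the three exponents are \<open>(e + D, 0)\<close>, \<open>(0, e + D)\<close> and \<open>(e, D)\<close> with \<open>e = b p\<close>.\<close>
  have "monomial n a1 x = W * x p ^ (b p + D)"
    using monomial_eq[of a1] b p(2) pq unfolding a1_def raise_on_def by (simp add: ac_simps)
  moreover have "monomial n a2 x = W * x q ^ (b p + D)"
    using monomial_eq[of a2] b p(2) q pq unfolding a2_def raise_on_def by (simp add: ac_simps)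
  moreover have "monomial n (raise_on S D b) x = W * (x p ^ b p * x q ^ D)"
    using monomial_eq[of "raise_on S D b"] b p(2) q pq unfolding raise_on_def by (simp add: ac_simps)
  moreover have "x p ^ (b p + D) + x q ^ (b p + D) + x p ^ b p * x q ^ D = x p ^ (b p + D) + x q ^ (b p + D)"
    using power_mixed_absorb b(1) D by blast
  ultimately show ?thesis by (metis distrib_left)
qed

definition deficit :: "nat set \<times> (nat \<Rightarrow> nat) \<Rightarrow> nat" where
  "deficit = (\<lambda>(S, b). card ({k. b k \<noteq> 0} - S))"

locale raised_exponent =
  fixes n m D :: nat and c :: "nat \<Rightarrow> nat"
  assumes m_le_n: "m \<le> n" and D_pos: "0 < D" and support: "{k. c k \<noteq> 0} \<subseteq> {1..m}"
begin

definition pairs :: "(nat set \<times> (nat \<Rightarrow> nat)) set" where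
  "pairs = {S. S \<subseteq> {1..n} \<and> card S = m} \<times> exponent_orbit n c"

definition covered_pairs :: "(nat set \<times> (nat \<Rightarrow> nat)) set" where
  "covered_pairs = {(S, b) \<in> pairs. {k. b k \<noteq> 0} \<subseteq> S}"

lemma finite_pairs: "finite pairs"
  unfolding pairs_def using finite_exponent_orbit
  by (intro finite_cartesian_product) (auto intro: finite_subset[of _ "Pow {1..n}"])

lemma support_orbit:
  assumes "b \<in> exponent_orbit n c"
  shows "{k. b k \<noteq> 0} \<subseteq> {1..n}" "finite {k. b k \<noteq> 0}" "card {k. b k \<noteq> 0} \<le> m"
proof -
  have c_n: "{k. c k \<noteq> 0} \<subseteq> {1..n}" using support m_le_n by auto
  show b_n: "{k. b k \<noteq> 0} \<subseteq> {1..n}" by (rule support_exponent_orbit(1)[OF assms c_n])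
  then show "finite {k. b k \<noteq> 0}" by (rule finite_subset) simp
  have "card {k. c k \<noteq> 0} \<le> m" using card_mono[OF _ support] by simp
  then show "card {k. b k \<noteq> 0} \<le> m" using support_exponent_orbit(2)[OF assms c_n] by simp
qed

lemma uncovered_pair_absorbed:
  fixes x :: "nat \<Rightarrow> 'a::supertropical"
  assumes "(S, b) \<in> pairs" "0 < deficit (S, b)"
  shows "\<exists>p1\<in>pairs. \<exists>p2\<in>pairs. p1 \<noteq> p2 \<and> deficit p1 < deficit (S, b) \<and> deficit p2 < deficit (S, b)
           \<and> raised_monomial n D x p1 + raised_monomial n D x p2 + raised_monomial n D x (S, b)
             = raised_monomial n D x p1 + raised_monomial n D x p2"
proof -
  define B where "B = {k. b k \<noteq> 0}"
  have S: "S \<subseteq> {1..n}" "card S = m" and b: "b \<in> exponent_orbit n c"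
    using assms(1) unfolding pairs_def by auto
  have B: "B \<subseteq> {1..n}" "finite B" "card B \<le> m" using support_orbit[OF b] unfolding B_def by auto
  have fin_S: "finite S" using S(1) finite_subset by blast
  have deficit_Sb: "deficit (S, b) = card (B - S)" unfolding deficit_def B_def by simp
  obtain p where p: "p \<in> B" "p \<notin> S"
    using assms(2) unfolding deficit_Sb by (auto dest!: card_gt_0_iff[THEN iffD1])
  obtain q where q: "q \<in> S" "q \<notin> B"
  proof (rule ccontr)
    assume "\<not> thesis"
    then have "S \<subseteq> B" using that by blast
    then have "S = B" using card_subset_eq[OF B(2)] card_mono[OF B(2)] S(2) B(3) by (metis le_antisym)
    then show False using p by blast
  qed
  define S1 where "S1 = insert p (S - {q})"
  define b2 where "b2 = b \<circ> transpose p q"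
  have pn: "p \<in> {1..n}" and qn: "q \<in> {1..n}" using p q B(1) S(1) by auto
  have "0 < m" using q(1) fin_S S(2) card_gt_0_iff by blast
  then have "card S1 = m" unfolding S1_def using p q fin_S S(2) by simp
  then have S1_pair: "(S1, b) \<in> pairs" unfolding pairs_def S1_def using S(1) pn b by auto
  have b2_pair: "(S, b2) \<in> pairs"
    unfolding pairs_def b2_def using S b exponent_orbit_comp_transpose[OF b pn qn] by auto
  have "{k. b k \<noteq> 0} - S1 = (B - S) - {p}" using q by (auto simp: S1_def B_def)
  moreover have "{k. b2 k \<noteq> 0} - S = (B - S) - {p}"
    using p q by (auto simp: b2_def B_def transpose_def split: if_splits)
  moreover have "card ((B - S) - {p}) < card (B - S)" using B(2) p by (intro card_Diff1_less) auto
  ultimately have "deficit (S1, b) < deficit (S, b)" "deficit (S, b2) < deficit (S, b)"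
    unfolding deficit_Sb unfolding deficit_def by simp_all
  moreover have "(S1, b) \<noteq> (S, b2)" unfolding S1_def using p by auto
  moreover have "raised_monomial n D x (S1, b) + raised_monomial n D x (S, b2) + raised_monomial n D x (S, b)
      = raised_monomial n D x (S1, b) + raised_monomial n D x (S, b2)"
    unfolding raised_monomial_def S1_def b2_def
    using monomial_raise_on_transpose_absorb[OF S(1) pn p(2) q(1) _ _ D_pos] p q by (simp add: B_def)
  ultimately show ?thesis using S1_pair b2_pair by blast
qed

lemma sum_pairs_eq_sum_covered:
  fixes x :: "nat \<Rightarrow> 'a::supertropical"
  shows "sum (raised_monomial n D x) pairs = sum (raised_monomial n D x) covered_pairs"
proof -
  have "sum (raised_monomial n D x) pairs = sum (raised_monomial n D x) {p \<in> pairs. deficit p = 0}"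
  proof (rule sum_absorb_by_measure[OF finite_pairs])
    fix p assume "p \<in> pairs" "0 < deficit p"
    then show "\<exists>p1\<in>pairs. \<exists>p2\<in>pairs. p1 \<noteq> p2 \<and> deficit p1 < deficit p \<and> deficit p2 < deficit p
        \<and> raised_monomial n D x p1 + raised_monomial n D x p2 + raised_monomial n D x p
          = raised_monomial n D x p1 + raised_monomial n D x p2"
      using uncovered_pair_absorbed[of "fst p" "snd p" x] by simp
  qed
  also have "{p \<in> pairs. deficit p = 0} = covered_pairs"
    unfolding covered_pairs_def deficit_def pairs_def using support_orbit(2) by fastforce
  finally show ?thesis .
qed

lemma exists_permutes_onto:
  assumes \<tau>: "\<tau> permutes {1..n}" and S: "S \<subseteq> {1..n}" "card S = m"
    and covered: "{k. c (\<tau> k) \<noteq> 0} \<subseteq> S"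
  shows "\<exists>\<sigma>. \<sigma> permutes {1..n} \<and> c \<circ> \<sigma> = c \<circ> \<tau> \<and> \<sigma> ` S = {1..m}"
proof -
  define V where "V = {k. c k \<noteq> 0}"
  define W where "W = {1..n} - V"
  have V: "finite V" "V \<subseteq> {1..m}" using support finite_subset unfolding V_def by auto
  have V_image: "V \<subseteq> \<tau> ` S"
  proof
    fix v assume "v \<in> V"
    obtain k where "\<tau> k = v" using permutes_surj[OF \<tau>] by (metis surjD)
    then show "v \<in> \<tau> ` S" using \<open>v \<in> V\<close> covered V_def by blast
  qed
  have "card (\<tau> ` S) = m" using S(2) permutes_inj[OF \<tau>] by (simp add: card_image inj_on_subset)
  then have "card (\<tau> ` S - V) = card ({1..m} - V)" using V V_image by (simp add: card_Diff_subset)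
  moreover have "\<tau> ` S - V \<subseteq> W" "{1..m} - V \<subseteq> W"
    using permutes_image[OF \<tau>] S(1) m_le_n unfolding W_def by auto
  moreover have "finite W" unfolding W_def by simp
  \<comment> \<open>\<open>\<rho>\<close> only moves zeros of \<open>c\<close>, so it does not change \<open>c\<close>.\<close>
  ultimately obtain \<rho> where \<rho>: "\<rho> permutes W" "\<rho> ` (\<tau> ` S - V) = {1..m} - V"
    using exists_permutes_image_eq by metis
  have fixes_V: "\<rho> v = v" if "v \<in> V" for v using permutes_not_in[OF \<rho>(1)] that W_def by auto
  have "c \<circ> \<rho> = c"
  proof
    fix y show "(c \<circ> \<rho>) y = c y"
    proof (cases "y \<in> W")
      case True
      then have "\<rho> y \<in> W" using permutes_in_image[OF \<rho>(1)] by blast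
      then show ?thesis using True unfolding W_def V_def by auto
    qed (use permutes_not_in[OF \<rho>(1)] in simp)
  qed
  moreover have "(\<rho> \<circ> \<tau>) ` S = {1..m}"
  proof -
    have "(\<rho> \<circ> \<tau>) ` S = \<rho> ` (\<tau> ` S - V) \<union> \<rho> ` V"
      using V_image by (auto simp: image_comp[symmetric] image_Un[symmetric] Un_absorb2 Diff_partition)
    also have "\<rho> ` V = V" using fixes_V by auto
    finally show ?thesis using \<rho>(2) V(2) by auto
  qed
  moreover have "\<rho> \<circ> \<tau> permutes {1..n}"
    using permutes_compose[OF \<tau> permutes_subset[OF \<rho>(1)]] W_def by auto
  ultimately show ?thesis by (metis comp_assoc)
qed

lemma raise_on_nonzero_iff:
  assumes "{k. b k \<noteq> 0} \<subseteq> S"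
  shows "raise_on S D b k \<noteq> 0 \<longleftrightarrow> k \<in> S"
  using assms D_pos unfolding raise_on_def by auto

lemma inj_on_raise_on_covered: "inj_on (\<lambda>(S, b). raise_on S D b) covered_pairs"
proof (rule inj_onI, clarify)
  fix S b S' b' assume cov: "(S, b) \<in> covered_pairs" "(S', b') \<in> covered_pairs"
    and eq: "raise_on S D b = raise_on S' D b'"
  have "S = {k. raise_on S D b k \<noteq> 0}" "S' = {k. raise_on S' D b' k \<noteq> 0}"
    using raise_on_nonzero_iff cov unfolding covered_pairs_def by auto
  then have "S = S'" using eq by simp
  moreover have "b = b'"
  proof
    fix k show "b k = b' k" using fun_cong[OF eq, of k] \<open>S = S'\<close> unfolding raise_on_def by simp
  qed
  ultimately show "S = S' \<and> b = b'" ..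
qed

lemma raise_on_image_covered:
  "(\<lambda>(S, b). raise_on S D b) ` covered_pairs = exponent_orbit n (raise_on {1..m} D c)"
proof
  show "(\<lambda>(S, b). raise_on S D b) ` covered_pairs \<subseteq> exponent_orbit n (raise_on {1..m} D c)"
  proof clarify
    fix S b assume "(S, b) \<in> covered_pairs"
    then have S: "S \<subseteq> {1..n}" "card S = m" and b: "b \<in> exponent_orbit n c"
      and cov: "{k. b k \<noteq> 0} \<subseteq> S"
      unfolding covered_pairs_def pairs_def by auto
    obtain \<tau> where \<tau>: "\<tau> permutes {1..n}" "b = c \<circ> \<tau>" using b unfolding exponent_orbit_def by blast
    obtain \<sigma> where \<sigma>: "\<sigma> permutes {1..n}" "c \<circ> \<sigma> = b" "\<sigma> ` S = {1..m}"
      using exists_permutes_onto[OF \<tau>(1) S] cov \<tau>(2) by auto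
    have "\<sigma> k \<in> {1..m} \<longleftrightarrow> k \<in> S" for k
      using \<sigma>(3) inj_image_mem_iff[OF permutes_inj[OF \<sigma>(1)]] by blast
    then have "raise_on S D b = raise_on {1..m} D c \<circ> \<sigma>"
      using \<sigma>(2) unfolding raise_on_def by (auto simp: fun_eq_iff)
    then show "raise_on S D b \<in> exponent_orbit n (raise_on {1..m} D c)"
      using \<sigma>(1) unfolding exponent_orbit_def by blast
  qed
  show "exponent_orbit n (raise_on {1..m} D c) \<subseteq> (\<lambda>(S, b). raise_on S D b) ` covered_pairs"
  proof
    fix a assume "a \<in> exponent_orbit n (raise_on {1..m} D c)"
    then obtain \<sigma> where \<sigma>: "\<sigma> permutes {1..n}" "a = raise_on {1..m} D c \<circ> \<sigma>"
      unfolding exponent_orbit_def by blast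
    define S where "S = \<sigma> -` {1..m}"
    have "S \<subseteq> {1..n}"
    proof
      fix k assume "k \<in> S"
      then have "\<sigma> k \<in> {1..n}" using m_le_n unfolding S_def by auto
      then show "k \<in> {1..n}" using permutes_in_image[OF \<sigma>(1)] by blast
    qed
    moreover have "card S = m"
      unfolding S_def using permutes_inj[OF \<sigma>(1)] permutes_surj[OF \<sigma>(1)] by (simp add: card_vimage_inj)
    moreover have "{k. (c \<circ> \<sigma>) k \<noteq> 0} \<subseteq> S" unfolding S_def using support by auto
    moreover have "c \<circ> \<sigma> \<in> exponent_orbit n c" using \<sigma>(1) unfolding exponent_orbit_def by blast
    moreover have "a = raise_on S D (c \<circ> \<sigma>)" unfolding \<sigma>(2) S_def raise_on_def by auto
    ultimately show "a \<in> (\<lambda>(S, b). raise_on S D b) ` covered_pairs"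
      unfolding covered_pairs_def pairs_def by (auto intro!: image_eqI[of _ _ "(S, c \<circ> \<sigma>)"])
  qed
qed

theorem minsym_raise_on:
  fixes x :: "nat \<Rightarrow> 'a::supertropical"
  shows "minsym n (raise_on {1..m} D c) x = esym n m x ^ D * minsym n c x"
proof -
  have "minsym n (raise_on {1..m} D c) x = (\<Sum>a\<in>(\<lambda>(S, b). raise_on S D b) ` covered_pairs. monomial n a x)"
    by (simp only: minsym_eq_sum_orbit raise_on_image_covered)
  also have "\<dots> = sum (raised_monomial n D x) covered_pairs"
    by (subst sum.reindex[OF inj_on_raise_on_covered]) (simp add: raised_monomial_def comp_def case_prod_unfold)
  also have "\<dots> = sum (raised_monomial n D x) pairs"
    by (rule sum_pairs_eq_sum_covered[symmetric])
  also have "\<dots> = esym n m x ^ D * minsym n c x"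
    unfolding pairs_def by (rule esym_power_mult_minsym[OF D_pos, symmetric])
  finally show ?thesis .
qed

end

lemma chain_mono_le:
  fixes f :: "nat \<Rightarrow> 'a::order"
  assumes "\<forall>t<j. f t \<le> f (Suc t)" "a \<le> b" "b \<le> j"
  shows "f a \<le> f b"
  using assms(2,3)
proof (induction b rule: dec_induct)
  case (step n)
  then have "f a \<le> f n" "f n \<le> f (Suc n)" using assms(1) by simp_all
  then show ?case by (rule order_trans)
qed simp

lemma chain_antimono_le:
  fixes f :: "nat \<Rightarrow> 'a::order"
  assumes "\<forall>t\<in>{a..<j}. f (Suc t) \<le> f t" "a \<le> b" "b \<le> j"
  shows "f j \<le> f b"
  using assms(3,1)
proof (induction j rule: dec_induct)
  case (step n)
  have "f n \<le> f b" using step.IH step.prems by simp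
  moreover have "f (Suc n) \<le> f n" using step.prems step.hyps(1) assms(2) by simp
  ultimately show ?case by (meson order_trans)
qed simp

lemma sum_blk:
  assumes "\<forall>t<j. i t \<le> i (Suc t)"
  shows "(\<Sum>t\<in>{1..j}. blk i t k) = (if i 0 < k \<and> k \<le> i j then 1 else 0)"
  using assms
proof (induction j)
  case (Suc j)
  have "i 0 \<le> i j" "i j \<le> i (Suc j)" using chain_mono_le[OF Suc.prems, of 0 j] Suc.prems by auto
  then show ?case using Suc by (auto simp: blk_def)
qed simp

lemma support_block_exponent:
  assumes "i 0 = 0" "\<forall>t<j. i t \<le> i (Suc t)"
  shows "{k. (\<Sum>t\<in>{1..j - 1}. f t * blk i t k) \<noteq> 0} \<subseteq> {1..i j}"
proof
  fix k assume "k \<in> {k. (\<Sum>t\<in>{1..j - 1}. f t * blk i t k) \<noteq> 0}"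
  then obtain t where "t \<in> {1..j - 1}" "blk i t k \<noteq> 0" by (auto elim: sum.not_neutral_contains_not_neutral)
  then have "(\<Sum>t\<in>{1..j}. blk i t k) \<noteq> 0" by (auto simp: sum_eq_0_iff)
  then show "k \<in> {1..i j}" using sum_blk[OF assms(2), of k] assms(1) by (auto split: if_splits)
qed

lemma block_exponent_eq_raise_on:
  assumes "1 \<le> j" "i 0 = 0" "\<forall>t<j. i t \<le> i (Suc t)" "\<forall>t\<in>{1..j}. d j \<le> d t"
  shows "(\<lambda>k. \<Sum>t\<in>{1..j}. d t * blk i t k)
       = raise_on {1..i j} (d j) (\<lambda>k. \<Sum>t\<in>{1..j - 1}. (d t - d j) * blk i t k)"
proof
  fix k
  have "(\<Sum>t\<in>{1..j}. d t * blk i t k) = (\<Sum>t\<in>{1..j}. (d t - d j) * blk i t k + d j * blk i t k)"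
    using assms(4) by (intro sum.cong) (auto simp: add_mult_distrib[symmetric])
  also have "\<dots> = (\<Sum>t\<in>{1..j}. (d t - d j) * blk i t k) + d j * (\<Sum>t\<in>{1..j}. blk i t k)"
    by (simp add: sum.distrib sum_distrib_left)
  also have "(\<Sum>t\<in>{1..j}. (d t - d j) * blk i t k) = (\<Sum>t\<in>{1..j - 1}. (d t - d j) * blk i t k)"
  proof -
    have "{1..j} = insert j {1..j - 1}" using assms(1) by auto
    then show ?thesis using assms(1) by simp
  qed
  finally show "(\<Sum>t\<in>{1..j}. d t * blk i t k) = raise_on {1..i j} (d j) (\<lambda>k. \<Sum>t\<in>{1..j - 1}. (d t - d j) * blk i t k) k"
    using sum_blk[OF assms(3), of k] assms(2) by (simp add: raise_on_def)
qed

theorem lemma5p7: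
  fixes x :: "nat \<Rightarrow> 'a::supertropical" and n j :: nat and i d :: "nat \<Rightarrow> nat"
  assumes "j \<ge> 1"
    and "i 0 = 0"
    and "\<forall>t<j. i t < i (Suc t)"
    and "i j \<le> n"
    and "\<forall>t\<in>{1..j}. d t \<ge> 1"
    and "\<forall>t\<in>{1..<j}. d (Suc t) < d t"
  shows "minsym n (\<lambda>k. \<Sum>t\<in>{1..j}. d t * blk i t k) x
       = esym n (i j) x ^ d j * minsym n (\<lambda>k. \<Sum>t\<in>{1..j-1}. (d t - d j) * blk i t k) x"
proof -
  have i_mono: "\<forall>t<j. i t \<le> i (Suc t)" using assms(3) by (simp add: less_imp_le)
  have d_min: "\<forall>t\<in>{1..j}. d j \<le> d t"
    using chain_antimono_le[of 1 j d] assms(6) by (auto simp: less_imp_le)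
  have "0 < d j" using bspec[OF assms(5), of j] assms(1) by simp
  interpret raised_exponent n "i j" "d j" "\<lambda>k. \<Sum>t\<in>{1..j-1}. (d t - d j) * blk i t k"
    using assms(4) \<open>0 < d j\<close> support_block_exponent[OF assms(2) i_mono] by unfold_locales
  show ?thesis
    unfolding block_exponent_eq_raise_on[OF assms(1,2) i_mono d_min] by (rule minsym_raise_on)
qed

end
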